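(* Let $k,n\in\mathbb{N}$ and let $Z_{n,k}$ be the Cayley graph of $\mathbb{Z}/n\mathbb{Z}$ with respect to $\{-k,\ldots,k\}$. If $A\subset Z_{n,k}$ satisfies $k\le|A|\le n-k$, then $|\partial^EA|\ge\frac14k^2-1$.
   Context: In the Cayley graph $\mathcal{C}(G,S)$ of a group $G$ with symmetric generating set $S$, vertices are elements of $G$ and $x,y$ are adjacent iff $y=xs$ for some $s\in S\setminus\{1\}$. $\partial^EA$ is the set of edges with exactly one endpoint in $A$. *)

theory Defs
  imports Complex_Main
begin

text \<open>Cayley graph of Z/nZ w.r.t. the symmetric set
  S = {-k,...,k} (taken mod n): x ~ y iff y = x + s (mod n) for some s in S
  with s not the identity (s mod n \<noteq> 0).\<close>

definition cyc_vertices :: "nat \<Rightarrow> int set" where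
  "cyc_vertices n = {0..<int n}"

definition cyc_adj :: "nat \<Rightarrow> nat \<Rightarrow> int \<Rightarrow> int \<Rightarrow> bool" where
  "cyc_adj n k x y \<longleftrightarrow> x \<in> cyc_vertices n \<and> y \<in> cyc_vertices n \<and>
     (\<exists>s\<in>{- int k..int k}. s mod int n \<noteq> 0 \<and> y = (x + s) mod int n)"

definition cyc_edges :: "nat \<Rightarrow> nat \<Rightarrow> int set set" where
  "cyc_edges n k = {{x, y} | x y. cyc_adj n k x y}"

definition edge_boundary :: "nat \<Rightarrow> nat \<Rightarrow> int set \<Rightarrow> int set set" where
  "edge_boundary n k A = {e \<in> cyc_edges n k. card (e \<inter> A) = 1}"

end

theory Submission imports Defs begin

text \<open>Let \<open>f x\<close> be the number of elements of \<open>A\<close> among \<open>x, x + 1, \<dots>, x + k\<close> and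
  \<open>h = \<lceil>k / 2\<rceil>\<close>. Any two points of such a window are adjacent and \<open>f\<close> changes by at most one
  from one window to the next. If some window has exactly \<open>h\<close> points of \<open>A\<close>, the pairs
  inside it already give \<open>h (k + 1 - h) \<ge> k\<^sup>2 / 4\<close> boundary edges. Otherwise, by the discrete
  intermediate value theorem, either every window has at most \<open>h\<close> points of \<open>A\<close>, and each of
  the at least \<open>k\<close> points of \<open>A\<close> has \<open>k + 1 - h\<close> forward neighbours outside \<open>A\<close>, or every
  window has more than \<open>h\<close> points of \<open>A\<close>, and each of the at least \<open>k\<close> points outside \<open>A\<close>
  has more than \<open>h\<close> forward neighbours in \<open>A\<close>.\<close>

definition window_count :: "nat \<Rightarrow> nat \<Rightarrow> int set \<Rightarrow> int \<Rightarrow> nat" where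
  "window_count n k A x = card {d \<in> {..k}. (x + int d) mod int n \<in> A}"

lemma finite_edge_boundary: "finite (edge_boundary n k A)"
proof (rule finite_subset)
  show "edge_boundary n k A \<subseteq> Pow (cyc_vertices n)"
    unfolding edge_boundary_def cyc_edges_def cyc_adj_def by auto
  show "finite (Pow (cyc_vertices n))"
    unfolding cyc_vertices_def by simp
qed

lemma mod_pair_in_edge_boundary:
  fixes u v :: int
  assumes "k < n" "\<bar>u - v\<bar> \<le> int k" "u mod int n \<in> A \<longleftrightarrow> v mod int n \<notin> A"
  shows "{u mod int n, v mod int n} \<in> edge_boundary n k A"
proof -
  define s where "s = v - u"
  have "s \<noteq> 0" "\<bar>s\<bar> < int n"
    using assms unfolding s_def by auto
  then have "s mod int n \<noteq> 0"
    by (metis dvd_imp_le_int mod_0_imp_dvd not_le abs_of_nat)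
  moreover have "v mod int n = (u mod int n + s) mod int n"
    by (simp add: s_def mod_add_left_eq)
  moreover have "s \<in> {- int k..int k}" using assms(2) unfolding s_def by auto
  moreover have "u mod int n \<in> cyc_vertices n" "v mod int n \<in> cyc_vertices n"
    using assms(1) unfolding cyc_vertices_def by auto
  ultimately have "cyc_adj n k (u mod int n) (v mod int n)"
    unfolding cyc_adj_def by blast
  moreover have "card ({u mod int n, v mod int n} \<inter> A) = 1"
    using assms(3) by (cases "u mod int n \<in> A") (auto simp: Int_insert_left)
  ultimately show ?thesis
    unfolding edge_boundary_def cyc_edges_def by blast
qed

lemma inj_on_add_mod: "inj_on (\<lambda>d. (z + int d) mod int n) {..<n}"
proof (rule inj_onI)
  fix d d' assume "d \<in> {..<n}" "d' \<in> {..<n}" "(z + int d) mod int n = (z + int d') mod int n"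
  then have "int d mod int n = int d' mod int n"
    by algebra
  then show "d = d'"
    using \<open>d \<in> {..<n}\<close> \<open>d' \<in> {..<n}\<close> by simp
qed

lemma sum_crossing_offsets_le_edge_boundary:
  assumes "k < n" "X \<subseteq> cyc_vertices n" "\<forall>x\<in>X. x \<in> A \<longleftrightarrow> b"
  shows "(\<Sum>x\<in>X. card {d \<in> {..k}. (x + int d) mod int n \<in> A \<longleftrightarrow> \<not> b})
           \<le> card (edge_boundary n k A)"
proof -
  define D where "D x = {d \<in> {..k}. (x + int d) mod int n \<in> A \<longleftrightarrow> \<not> b}" for x
  define edge where "edge p = {fst p, (fst p + int (snd p)) mod int n}" for p :: "int \<times> nat"
  have "finite X"
    using assms(2) finite_subset unfolding cyc_vertices_def by blast
  have X_mod: "x mod int n = x" if "x \<in> X" for x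
    using assms(2) that unfolding cyc_vertices_def by auto
  have "edge ` Sigma X D \<subseteq> edge_boundary n k A"
  proof clarify
    fix x d assume "x \<in> X" "d \<in> D x"
    then show "edge (x, d) \<in> edge_boundary n k A"
      using mod_pair_in_edge_boundary[of k n x "x + int d" A] assms X_mod
      unfolding D_def edge_def by auto
  qed
  moreover have "inj_on edge (Sigma X D)"
  proof (rule inj_onI, clarify)
    fix x d x' d' assume "x \<in> X" "d \<in> D x" "x' \<in> X" "d' \<in> D x'" "edge (x, d) = edge (x', d')"
    \<comment> \<open>an edge of the boundary has exactly one endpoint on side b, namely its start\<close>
    then have "x = x'" "(x + int d) mod int n = (x' + int d') mod int n"
      using assms(3) unfolding D_def edge_def by (auto simp: doubleton_eq_iff)
    moreover have "d < n" "d' < n"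
      using \<open>d \<in> D x\<close> \<open>d' \<in> D x'\<close> assms(1) unfolding D_def by auto
    ultimately show "x = x' \<and> d = d'"
      using inj_on_add_mod[of x n] by (auto dest: inj_onD)
  qed
  ultimately have "card (Sigma X D) \<le> card (edge_boundary n k A)"
    using finite_edge_boundary by (metis card_image card_mono)
  moreover have "card (Sigma X D) = (\<Sum>x\<in>X. card (D x))"
    using \<open>finite X\<close> by (simp add: D_def)
  ultimately show ?thesis
    unfolding D_def by simp
qed

lemma window_count_product_le_edge_boundary:
  assumes "k < n"
  shows "window_count n k A z * (Suc k - window_count n k A z) \<le> card (edge_boundary n k A)"
proof -
  define pos where "pos d = (z + int d) mod int n" for d
  define F where "F = {d \<in> {..k}. pos d \<in> A}"
  define G where "G = {..k} - F"
  define edge where "edge p = {pos (fst p), pos (snd p)}" for p :: "nat \<times> nat"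
  have "card G = Suc k - window_count n k A z"
    unfolding G_def F_def pos_def window_count_def by (subst card_Diff_subset) auto
  have inj_pos: "inj_on pos {..k}"
    unfolding pos_def by (rule inj_on_subset[OF inj_on_add_mod]) (use assms in auto)
  have "edge ` (F \<times> G) \<subseteq> edge_boundary n k A"
  proof clarify
    fix d d' assume "d \<in> F" "d' \<in> G"
    then show "edge (d, d') \<in> edge_boundary n k A"
      using mod_pair_in_edge_boundary[of k n "z + int d" "z + int d'" A] assms
      unfolding edge_def pos_def F_def G_def by auto
  qed
  moreover have "inj_on edge (F \<times> G)"
  proof (rule inj_onI, clarify)
    fix d e d' e' assume "d \<in> F" "e \<in> G" "d' \<in> F" "e' \<in> G" "edge (d, e) = edge (d', e')"
    then have "pos d = pos d'" "pos e = pos e'"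
      unfolding edge_def F_def G_def by (auto simp: doubleton_eq_iff)
    then show "d = d' \<and> e = e'"
      using \<open>d \<in> F\<close> \<open>e \<in> G\<close> \<open>d' \<in> F\<close> \<open>e' \<in> G\<close> inj_pos
      unfolding F_def G_def by (auto dest: inj_onD)
  qed
  ultimately have "card (F \<times> G) \<le> card (edge_boundary n k A)"
    using finite_edge_boundary by (metis card_image card_mono)
  then show ?thesis
    using \<open>card G = Suc k - window_count n k A z\<close>
    by (simp add: card_cartesian_product F_def pos_def window_count_def)
qed

lemma edge_boundary_ge_if_window_counts_le:
  assumes "k < n" "A \<subseteq> cyc_vertices n" "\<forall>x\<in>A. window_count n k A x \<le> t"
  shows "card A * (Suc k - t) \<le> card (edge_boundary n k A)"
proof -
  have crossing_eq: "card {d \<in> {..k}. (x + int d) mod int n \<in> A \<longleftrightarrow> \<not> True}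
                       = Suc k - window_count n k A x" for x
  proof -
    have "{d \<in> {..k}. (x + int d) mod int n \<in> A \<longleftrightarrow> \<not> True}
            = {..k} - {d \<in> {..k}. (x + int d) mod int n \<in> A}"
      by auto
    then show ?thesis
      unfolding window_count_def by (simp only:) (subst card_Diff_subset, auto)
  qed
  have "card A * (Suc k - t) \<le> (\<Sum>x\<in>A. Suc k - window_count n k A x)"
    using sum_bounded_below[of A "Suc k - t" "\<lambda>x. Suc k - window_count n k A x"] assms(3)
    by (simp add: diff_le_mono2)
  also have "\<dots> \<le> card (edge_boundary n k A)"
    using sum_crossing_offsets_le_edge_boundary[of k n A A True] assms(1,2)
    unfolding crossing_eq by simp
  finally show ?thesis .
qed

lemma edge_boundary_ge_if_window_counts_ge:
  assumes "k < n" "A \<subseteq> cyc_vertices n" "\<forall>x\<in>cyc_vertices n - A. t \<le> window_count n k A x"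
  shows "(n - card A) * t \<le> card (edge_boundary n k A)"
proof -
  have "card (cyc_vertices n - A) = n - card A"
    using assms(2) finite_subset[OF assms(2)] unfolding cyc_vertices_def
    by (simp add: card_Diff_subset)
  then have "(n - card A) * t \<le> (\<Sum>x\<in>cyc_vertices n - A. window_count n k A x)"
    using sum_bounded_below[of "cyc_vertices n - A" t "window_count n k A"] assms(3) by simp
  also have "\<dots> \<le> card (edge_boundary n k A)"
    using sum_crossing_offsets_le_edge_boundary[of k n "cyc_vertices n - A" A False] assms(1)
    unfolding window_count_def by simp
  finally show ?thesis .
qed

lemma window_count_succ_diff: "\<bar>int (window_count n k A (x + 1)) - int (window_count n k A x)\<bar> \<le> 1"
proof -
  define ind where "ind y = (if y mod int n \<in> A then 1 else 0 :: nat)" for y :: int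
  have count_eq_sum: "window_count n k A y = (\<Sum>d<Suc k. ind (y + int d))" for y
    unfolding window_count_def ind_def
    using sum.inter_filter[of "{..k}" "\<lambda>_. 1::nat"] by (simp add: lessThan_Suc_atMost)
  \<comment> \<open>consecutive windows share all positions but one at either end\<close>
  have "window_count n k A x = ind x + (\<Sum>d<k. ind (x + 1 + int d))"
    unfolding count_eq_sum by (subst sum.lessThan_Suc_shift) (simp add: ac_simps)
  moreover have "window_count n k A (x + 1) = (\<Sum>d<k. ind (x + 1 + int d)) + ind (x + 1 + int k)"
    unfolding count_eq_sum by simp
  moreover have "ind x \<le> 1" "ind (x + 1 + int k) \<le> 1"
    unfolding ind_def by auto
  ultimately show ?thesis by linarith
qed

lemma int_intermed_int_val:
  fixes g :: "int \<Rightarrow> int"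
  assumes step: "\<And>i. \<bar>g (i + 1) - g i\<bar> \<le> 1" and "g a \<le> c" "c \<le> g b"
  shows "\<exists>i. g i = c"
proof (cases "a \<le> b")
  case True
  have "\<bar>g (a + int (i + 1)) - g (a + int i)\<bar> \<le> 1" for i
    using step[of "a + int i"] by (simp add: algebra_simps)
  then have "\<exists>i\<le>nat (b - a). g (a + int i) = c"
    using nat0_intermed_int_val[of "nat (b - a)" "\<lambda>i. g (a + int i)" c] assms True by simp
  then show ?thesis by blast
next
  case False
  have "\<bar>g (a - int (i + 1)) - g (a - int i)\<bar> \<le> 1" for i
    using step[of "a - int i - 1"] by (simp add: abs_minus_commute algebra_simps)
  then have "\<exists>i\<le>nat (a - b). g (a - int i) = c"
    using nat0_intermed_int_val[of "nat (a - b)" "\<lambda>i. g (a - int i)" c] assms False by simp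
  then show ?thesis by blast
qed

lemma sq_le_four_mult_half: "(k::nat)^2 \<le> 4 * (Suc k div 2 * (Suc k - Suc k div 2))"
proof (cases "even k")
  case True
  then obtain t where "k = 2 * t" by blast
  then show ?thesis by (simp add: power2_eq_square)
next
  case False
  then obtain t where "k = 2 * t + 1" using oddE by blast
  then show ?thesis by (simp add: power2_eq_square)
qed

lemma half_window_product_le_edge_boundary:
  assumes "A \<subseteq> cyc_vertices n" "0 < k" "k \<le> card A" "card A + k \<le> n"
  shows "Suc k div 2 * (Suc k - Suc k div 2) \<le> card (edge_boundary n k A)"
proof -
  let ?E = "card (edge_boundary n k A)" and ?f = "window_count n k A"
  define h where "h = Suc k div 2"
  have "k < n" "h \<le> k" "Suc k - h \<le> Suc h"
    using assms unfolding h_def by auto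
  have "\<exists>z. ?f z = h" if "?f x \<le> h" "h \<le> ?f y" for x y
    using int_intermed_int_val[of "\<lambda>x. int (?f x)" x "int h" y] window_count_succ_diff that
    by auto
  then consider z where "?f z = h" | "\<forall>x. ?f x \<le> h" | "\<forall>x. h < ?f x"
    by (metis less_imp_le not_le)
  then show ?thesis
  proof cases
    case 1
    then show ?thesis
      unfolding h_def using window_count_product_le_edge_boundary[OF \<open>k < n\<close>] by metis
  next
    case 2
    have "h * (Suc k - h) \<le> card A * (Suc k - h)"
      using \<open>h \<le> k\<close> assms(3) by simp
    also have "\<dots> \<le> ?E"
      using 2 by (intro edge_boundary_ge_if_window_counts_le[OF \<open>k < n\<close> assms(1)]) simp
    finally show ?thesis unfolding h_def .
  next
    case 3
    have "h * (Suc k - h) \<le> (n - card A) * Suc h"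
      using \<open>h \<le> k\<close> \<open>Suc k - h \<le> Suc h\<close> assms(4) by (intro mult_le_mono) linarith+
    also have "\<dots> \<le> ?E"
      using 3 by (intro edge_boundary_ge_if_window_counts_ge[OF \<open>k < n\<close> assms(1)])
        (simp add: Suc_le_eq)
    finally show ?thesis unfolding h_def .
  qed
qed

theorem mainTheorem20:
  fixes n k :: nat and A :: "int set"
  assumes "A \<subseteq> cyc_vertices n"
    and "k \<le> card A" and "int (card A) \<le> int n - int k"
  shows "real (card (edge_boundary n k A)) \<ge> (real k)^2 / 4 - 1"
proof (cases "k = 0")
  case False
  then have "Suc k div 2 * (Suc k - Suc k div 2) \<le> card (edge_boundary n k A)"
    using assms by (intro half_window_product_le_edge_boundary) linarith+
  then have "k ^ 2 \<le> 4 * card (edge_boundary n k A)"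
    using sq_le_four_mult_half[of k] by linarith
  then have "real (k ^ 2) \<le> real (4 * card (edge_boundary n k A))"
    by (simp only: of_nat_le_iff)
  then show ?thesis by simp
qed simp

end
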